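(* Let $G=(V,S,\sigma,w,\theta,\pi)$ be a restaking network with $\theta(s)>0$ for all $s\in S$. Suppose that for every validator $v\in V$ $$\sum_{s\in S}\frac{w(v,s)}{\sum_{v'\in V}w(v',s)}\cdot\frac{\pi(s)}{\theta(s)}<\sigma(v),$$ and for every service $s\in S$ $$\sum_{v\in V}w(v,s)>\frac{\pi(s)}{\theta(s)}.$$ Then there is no profitable attack in $G$ (equivalently, $G$ is cryptoeconomically secure).
   Context: A restaking network is a tuple $G=(V,S,\sigma,w,\theta,\pi)$ with finite nonempty validator set $V$, finite service set $S$, stake $\sigma:V\to\mathbb{R}_{>0}$, allocation $w:V\times S\to\mathbb{R}_{\ge0}$ with $w(v,s)\le\sigma(v)$, thresholds $\theta:S\to[0,1]$ and prizes $\pi:S\to\mathbb{R}_{>0}$. An attack is $\alpha:V\times S\to\mathbb{R}_{\ge0}$ with $\alpha(v,s)\le w(v,s)$. Attacked services: $S_\alpha=\{s:\sum_v\alpha(v,s)\ge\theta(s)\sum_v w(v,s)\}$. Validator cost $c_v(\alpha)=\min(\sigma(v),\sum_{s\in S_\alpha}\alpha(v,s))$, total cost $C(\alpha)=\sum_v c_v(\alpha)$, prize $\Pi(\alpha)=\sum_{s\in S_\alpha}\pi(s)$. The attack is profitable if $S_\alpha\ne\emptyset$ and $C(\alpha)\le\Pi(\alpha)$. (A network is cryptoeconomically secure iff no profitable attack exists.) *)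

theory Defs
  imports Complex_Main
begin

definition restaking_network ::
  "'v set \<Rightarrow> 's set \<Rightarrow> ('v \<Rightarrow> real) \<Rightarrow> ('v \<Rightarrow> 's \<Rightarrow> real) \<Rightarrow> ('s \<Rightarrow> real) \<Rightarrow> ('s \<Rightarrow> real) \<Rightarrow> bool"
where
  "restaking_network V S \<sigma> w \<theta> \<pi> \<longleftrightarrow>
     finite V \<and> V \<noteq> {} \<and> finite S \<and>
     (\<forall>v\<in>V. \<sigma> v > 0) \<and>
     (\<forall>v\<in>V. \<forall>s\<in>S. 0 \<le> w v s \<and> w v s \<le> \<sigma> v) \<and>
     (\<forall>s\<in>S. 0 \<le> \<theta> s \<and> \<theta> s \<le> 1) \<and>
     (\<forall>s\<in>S. \<pi> s > 0)"

definition is_attack ::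
  "'v set \<Rightarrow> 's set \<Rightarrow> ('v \<Rightarrow> 's \<Rightarrow> real) \<Rightarrow> ('v \<Rightarrow> 's \<Rightarrow> real) \<Rightarrow> bool"
where
  "is_attack V S w \<alpha> \<longleftrightarrow> (\<forall>v\<in>V. \<forall>s\<in>S. 0 \<le> \<alpha> v s \<and> \<alpha> v s \<le> w v s)"

definition attacked_services ::
  "'v set \<Rightarrow> 's set \<Rightarrow> ('v \<Rightarrow> 's \<Rightarrow> real) \<Rightarrow> ('s \<Rightarrow> real) \<Rightarrow> ('v \<Rightarrow> 's \<Rightarrow> real) \<Rightarrow> 's set"
where
  "attacked_services V S w \<theta> \<alpha> =
     {s\<in>S. (\<Sum>v\<in>V. \<alpha> v s) \<ge> \<theta> s * (\<Sum>v\<in>V. w v s)}"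

definition attack_cost ::
  "'v set \<Rightarrow> 's set \<Rightarrow> ('v \<Rightarrow> real) \<Rightarrow> ('v \<Rightarrow> 's \<Rightarrow> real) \<Rightarrow> ('s \<Rightarrow> real) \<Rightarrow> ('v \<Rightarrow> 's \<Rightarrow> real) \<Rightarrow> real"
where
  "attack_cost V S \<sigma> w \<theta> \<alpha> =
     (\<Sum>v\<in>V. min (\<sigma> v) (\<Sum>s\<in>attacked_services V S w \<theta> \<alpha>. \<alpha> v s))"

definition attack_prize ::
  "'v set \<Rightarrow> 's set \<Rightarrow> ('v \<Rightarrow> 's \<Rightarrow> real) \<Rightarrow> ('s \<Rightarrow> real) \<Rightarrow> ('s \<Rightarrow> real) \<Rightarrow> ('v \<Rightarrow> 's \<Rightarrow> real) \<Rightarrow> real"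
where
  "attack_prize V S w \<theta> \<pi> \<alpha> = (\<Sum>s\<in>attacked_services V S w \<theta> \<alpha>. \<pi> s)"

definition profitable_attack ::
  "'v set \<Rightarrow> 's set \<Rightarrow> ('v \<Rightarrow> real) \<Rightarrow> ('v \<Rightarrow> 's \<Rightarrow> real) \<Rightarrow> ('s \<Rightarrow> real) \<Rightarrow> ('s \<Rightarrow> real) \<Rightarrow> ('v \<Rightarrow> 's \<Rightarrow> real) \<Rightarrow> bool"
where
  "profitable_attack V S \<sigma> w \<theta> \<pi> \<alpha> \<longleftrightarrow>
     is_attack V S w \<alpha> \<and>
     attacked_services V S w \<theta> \<alpha> \<noteq> {} \<and>
     attack_cost V S \<sigma> w \<theta> \<alpha> \<le> attack_prize V S w \<theta> \<pi> \<alpha>"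

end

theory Submission
  imports Defs
begin

text \<open>Price every unit of stake that attacks service \<open>s\<close> at
  \<open>p(s) = \<pi>(s) / (\<theta>(s) \<Sum>\<^sub>v w(v,s))\<close>. Since an attacked service carries at least
  \<open>\<theta>(s) \<Sum>\<^sub>v w(v,s)\<close> attacking stake, its prize is paid for by the attackers at this
  price. By the service condition \<open>p < 1\<close>, so each validator is charged at most what it
  attacks with, and strictly less if it attacks at all; by the validator condition even
  attacking with its whole allocation is charged less than its stake. Hence the total charge,
  which dominates the prize, is strictly below the cost.\<close>

definition stake_price ::
  "'v set \<Rightarrow> ('v \<Rightarrow> 's \<Rightarrow> real) \<Rightarrow> ('s \<Rightarrow> real) \<Rightarrow> ('s \<Rightarrow> real) \<Rightarrow> 's \<Rightarrow> real"
where
  "stake_price V w \<theta> \<pi> s = \<pi> s / (\<theta> s * (\<Sum>v\<in>V. w v s))"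

lemma sum_mult_le_sum:
  fixes x c :: "'a \<Rightarrow> real"
  assumes "\<forall>s\<in>A. 0 \<le> x s" and "\<forall>s\<in>A. c s \<le> 1"
  shows "(\<Sum>s\<in>A. x s * c s) \<le> (\<Sum>s\<in>A. x s)"
  using assms by (intro sum_mono) (simp add: mult_left_le)

lemma sum_mult_less_sum:
  fixes x c :: "'a \<Rightarrow> real"
  assumes "finite A" and "\<forall>s\<in>A. 0 \<le> x s" and "\<forall>s\<in>A. c s < 1"
    and "s\<^sub>0 \<in> A" and "0 < x s\<^sub>0"
  shows "(\<Sum>s\<in>A. x s * c s) < (\<Sum>s\<in>A. x s)"
proof (rule sum_strict_mono_ex1[OF \<open>finite A\<close>])
  show "\<forall>s\<in>A. x s * c s \<le> x s"
    using assms(2,3) by (simp add: less_imp_le mult_left_le)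
  show "\<exists>s\<in>A. x s * c s < x s"
    using assms(3-5) by (intro bexI[of _ s\<^sub>0]) auto
qed

lemma stake_price_bounds:
  assumes "0 < \<theta> s" and "0 < \<pi> s" and "\<pi> s / \<theta> s < (\<Sum>v\<in>V. w v s)"
  shows "0 < stake_price V w \<theta> \<pi> s" and "stake_price V w \<theta> \<pi> s < 1"
proof -
  have "\<pi> s < \<theta> s * (\<Sum>v\<in>V. w v s)"
    using assms by (simp add: divide_less_eq mult.commute)
  moreover have "0 < \<theta> s * (\<Sum>v\<in>V. w v s)"
    using assms(2) calculation by linarith
  ultimately show "0 < stake_price V w \<theta> \<pi> s" and "stake_price V w \<theta> \<pi> s < 1"
    using assms(2) unfolding stake_price_def by auto
qed

lemma prize_le_stake_price_mult_attacking_stake: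
  assumes "s \<in> attacked_services V S w \<theta> \<alpha>"
    and "0 < \<theta> s" and "0 \<le> \<pi> s" and "0 < (\<Sum>v\<in>V. w v s)"
  shows "\<pi> s \<le> stake_price V w \<theta> \<pi> s * (\<Sum>v\<in>V. \<alpha> v s)"
proof -
  have "\<pi> s = stake_price V w \<theta> \<pi> s * (\<theta> s * (\<Sum>v\<in>V. w v s))"
    using assms(2,4) unfolding stake_price_def by simp
  also have "\<dots> \<le> stake_price V w \<theta> \<pi> s * (\<Sum>v\<in>V. \<alpha> v s)"
    using assms unfolding attacked_services_def stake_price_def
    by (intro mult_left_mono) auto
  finally show ?thesis .
qed

lemma attacked_service_has_attacker:
  assumes "finite V" and "s \<in> attacked_services V S w \<theta> \<alpha>"
    and "0 < \<theta> s" and "0 < (\<Sum>v\<in>V. w v s)"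
  shows "\<exists>v\<in>V. 0 < \<alpha> v s"
proof -
  have "0 < (\<Sum>v\<in>V. \<alpha> v s)"
    using assms(2-4) unfolding attacked_services_def
    by (auto intro: less_le_trans[OF mult_pos_pos])
  then show ?thesis
    by (metis not_le sum_nonpos)
qed

lemma attack_prize_le_total_charge:
  assumes "restaking_network V S \<sigma> w \<theta> \<pi>"
    and "\<forall>s\<in>S. 0 < \<theta> s" and "\<forall>s\<in>S. 0 < (\<Sum>v\<in>V. w v s)"
  shows "attack_prize V S w \<theta> \<pi> \<alpha>
    \<le> (\<Sum>v\<in>V. \<Sum>s\<in>attacked_services V S w \<theta> \<alpha>. \<alpha> v s * stake_price V w \<theta> \<pi> s)"
proof -
  let ?A = "attacked_services V S w \<theta> \<alpha>"
  have "attack_prize V S w \<theta> \<pi> \<alpha> \<le> (\<Sum>s\<in>?A. stake_price V w \<theta> \<pi> s * (\<Sum>v\<in>V. \<alpha> v s))"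
    unfolding attack_prize_def
  proof (rule sum_mono)
    fix s assume s: "s \<in> ?A"
    then have "s \<in> S" unfolding attacked_services_def by simp
    with s assms show "\<pi> s \<le> stake_price V w \<theta> \<pi> s * (\<Sum>v\<in>V. \<alpha> v s)"
      unfolding restaking_network_def
      by (intro prize_le_stake_price_mult_attacking_stake) auto
  qed
  also have "\<dots> = (\<Sum>v\<in>V. \<Sum>s\<in>?A. \<alpha> v s * stake_price V w \<theta> \<pi> s)"
    by (simp add: sum_distrib_left sum_distrib_right mult.commute sum.swap[of _ ?A])
  finally show ?thesis .
qed

lemma charge_less_stake:
  assumes "restaking_network V S \<sigma> w \<theta> \<pi>" and "is_attack V S w \<alpha>"
    and "\<forall>s\<in>S. 0 < \<theta> s" and "\<forall>s\<in>S. \<pi> s / \<theta> s < (\<Sum>v\<in>V. w v s)"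
    and "(\<Sum>s\<in>S. (w v s / (\<Sum>v'\<in>V. w v' s)) * (\<pi> s / \<theta> s)) < \<sigma> v"
    and "v \<in> V" and "A \<subseteq> S"
  shows "(\<Sum>s\<in>A. \<alpha> v s * stake_price V w \<theta> \<pi> s) < \<sigma> v"
proof -
  have price_pos: "0 < stake_price V w \<theta> \<pi> s" if "s \<in> S" for s
    using assms(1,3,4) that unfolding restaking_network_def
    by (intro stake_price_bounds(1)) auto
  have "(\<Sum>s\<in>A. \<alpha> v s * stake_price V w \<theta> \<pi> s) \<le> (\<Sum>s\<in>A. w v s * stake_price V w \<theta> \<pi> s)"
    using assms(2,6,7) price_pos unfolding is_attack_def
    by (intro sum_mono mult_right_mono) (auto simp: less_imp_le subset_iff)
  also have "\<dots> \<le> (\<Sum>s\<in>S. w v s * stake_price V w \<theta> \<pi> s)"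
    using assms(1,6,7) price_pos unfolding restaking_network_def
    by (intro sum_mono2) (auto simp: less_imp_le)
  also have "\<dots> = (\<Sum>s\<in>S. (w v s / (\<Sum>v'\<in>V. w v' s)) * (\<pi> s / \<theta> s))"
    unfolding stake_price_def by (simp add: mult.commute)
  finally show ?thesis
    using assms(5) by linarith
qed

lemma total_charge_less_attack_cost:
  assumes "restaking_network V S \<sigma> w \<theta> \<pi>" and "is_attack V S w \<alpha>"
    and "attacked_services V S w \<theta> \<alpha> \<noteq> {}"
    and "\<forall>s\<in>S. 0 < \<theta> s"
    and "\<forall>v\<in>V. (\<Sum>s\<in>S. (w v s / (\<Sum>v'\<in>V. w v' s)) * (\<pi> s / \<theta> s)) < \<sigma> v"
    and "\<forall>s\<in>S. \<pi> s / \<theta> s < (\<Sum>v\<in>V. w v s)"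
  shows "(\<Sum>v\<in>V. \<Sum>s\<in>attacked_services V S w \<theta> \<alpha>. \<alpha> v s * stake_price V w \<theta> \<pi> s)
    < attack_cost V S \<sigma> w \<theta> \<alpha>"
proof -
  let ?A = "attacked_services V S w \<theta> \<alpha>"
  let ?charge = "\<lambda>v. \<Sum>s\<in>?A. \<alpha> v s * stake_price V w \<theta> \<pi> s"
  have AS: "?A \<subseteq> S" and "finite ?A" and "finite V"
    using assms(1) unfolding attacked_services_def restaking_network_def by auto
  have W_pos: "0 < (\<Sum>v\<in>V. w v s)" and price_lt_1: "stake_price V w \<theta> \<pi> s < 1"
    if "s \<in> S" for s
    using assms(1,4,6) that unfolding restaking_network_def
    by (auto intro: stake_price_bounds(2) less_trans[OF divide_pos_pos])
  have \<alpha>_nonneg: "\<forall>s\<in>?A. 0 \<le> \<alpha> v s" if "v \<in> V" for v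
    using assms(2) AS that unfolding is_attack_def by blast
  obtain s\<^sub>0 where s\<^sub>0: "s\<^sub>0 \<in> ?A" using assms(3) by blast
  with AS obtain v\<^sub>0 where v\<^sub>0: "v\<^sub>0 \<in> V" "0 < \<alpha> v\<^sub>0 s\<^sub>0"
    using attacked_service_has_attacker[OF \<open>finite V\<close> s\<^sub>0] assms(4) W_pos by blast
  have "(\<Sum>v\<in>V. ?charge v) < (\<Sum>v\<in>V. min (\<sigma> v) (\<Sum>s\<in>?A. \<alpha> v s))"
  proof (rule sum_strict_mono_ex1[OF \<open>finite V\<close>])
    have "?charge v < \<sigma> v" if "v \<in> V" for v
      using charge_less_stake[OF assms(1,2,4,6)] assms(5) AS that by blast
    moreover have "?charge v \<le> (\<Sum>s\<in>?A. \<alpha> v s)" if "v \<in> V" for v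
      using sum_mult_le_sum[OF \<alpha>_nonneg[OF that]] price_lt_1 AS
      by (meson less_imp_le subsetD)
    moreover have "?charge v\<^sub>0 < (\<Sum>s\<in>?A. \<alpha> v\<^sub>0 s)"
      using sum_mult_less_sum[OF \<open>finite ?A\<close> \<alpha>_nonneg[OF v\<^sub>0(1)] _ s\<^sub>0 v\<^sub>0(2)] price_lt_1 AS
      by blast
    ultimately show "\<forall>v\<in>V. ?charge v \<le> min (\<sigma> v) (\<Sum>s\<in>?A. \<alpha> v s)"
      and "\<exists>v\<in>V. ?charge v < min (\<sigma> v) (\<Sum>s\<in>?A. \<alpha> v s)"
      using v\<^sub>0(1) by (auto intro: less_imp_le)
  qed
  then show ?thesis
    unfolding attack_cost_def .
qed

theorem mainTheorem4:
  fixes V :: "'v set" and S :: "'s set"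
    and \<sigma> :: "'v \<Rightarrow> real" and w :: "'v \<Rightarrow> 's \<Rightarrow> real"
    and \<theta> :: "'s \<Rightarrow> real" and \<pi> :: "'s \<Rightarrow> real"
  assumes "restaking_network V S \<sigma> w \<theta> \<pi>"
    and "\<forall>s\<in>S. \<theta> s > 0"
    and "\<forall>v\<in>V. (\<Sum>s\<in>S. (w v s / (\<Sum>v'\<in>V. w v' s)) * (\<pi> s / \<theta> s)) < \<sigma> v"
    and "\<forall>s\<in>S. (\<Sum>v\<in>V. w v s) > \<pi> s / \<theta> s"
  shows "\<not> (\<exists>\<alpha>. profitable_attack V S \<sigma> w \<theta> \<pi> \<alpha>)"
proof
  assume "\<exists>\<alpha>. profitable_attack V S \<sigma> w \<theta> \<pi> \<alpha>"
  then obtain \<alpha> where "is_attack V S w \<alpha>" and "attacked_services V S w \<theta> \<alpha> \<noteq> {}"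
    and profit: "attack_cost V S \<sigma> w \<theta> \<alpha> \<le> attack_prize V S w \<theta> \<pi> \<alpha>"
    unfolding profitable_attack_def by blast
  have "\<forall>s\<in>S. 0 < (\<Sum>v\<in>V. w v s)"
    using assms(1,2,4) unfolding restaking_network_def
    by (auto intro: less_trans[OF divide_pos_pos])
  then have "attack_prize V S w \<theta> \<pi> \<alpha>
      \<le> (\<Sum>v\<in>V. \<Sum>s\<in>attacked_services V S w \<theta> \<alpha>. \<alpha> v s * stake_price V w \<theta> \<pi> s)"
    using attack_prize_le_total_charge[OF assms(1,2)] by blast
  also have "\<dots> < attack_cost V S \<sigma> w \<theta> \<alpha>"
    using total_charge_less_attack_cost assms \<open>is_attack V S w \<alpha>\<close>
      \<open>attacked_services V S w \<theta> \<alpha> \<noteq> {}\<close> by blast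
  finally show False
    using profit by simp
qed

end
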